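(* Let $\rho_m>0$, $f(\rho)=\rho_m-\rho$, and let $\bar\rho$ satisfy $\frac{\rho_m}{2}<\bar\rho<\rho_m$. Then the linear system on $\mathbb{R}^2\times\mathbb{R}$ \[ \begin{cases} \partial_t\psi-(f(\bar\rho)-2\bar\rho)\partial_x\psi-\bar\rho f^2(\bar\rho)\Delta\varphi=0,\\ \partial_t\varphi-f(\bar\rho)\partial_x\varphi+\frac{1}{f(\bar\rho)}\psi=0 \end{cases} \] admits planar wave solutions of the form \[ \psi=A\cos(ax+by+ct),\qquad \varphi=B\sin(ax+by+ct), \] where $a,b,c\in\mathbb{R}$ and $A,B\in\mathbb{R}$ with $AB\neq0$.
   Context: $\Delta$ is the Laplacian in $(x,y)$. This is the linearization (without viscosity) of the generalized Hughes mean-field game system with $\beta=2$ around the constant state $(\bar\rho, x/f(\bar\rho))$. *)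

theory Defs
  imports "HOL-Analysis.Analysis"
begin

definition dx :: "(real \<Rightarrow> real \<Rightarrow> real \<Rightarrow> real) \<Rightarrow> real \<Rightarrow> real \<Rightarrow> real \<Rightarrow> real" where
  "dx u = (\<lambda>x y t. deriv (\<lambda>s. u s y t) x)"

definition dy :: "(real \<Rightarrow> real \<Rightarrow> real \<Rightarrow> real) \<Rightarrow> real \<Rightarrow> real \<Rightarrow> real \<Rightarrow> real" where
  "dy u = (\<lambda>x y t. deriv (\<lambda>s. u x s t) y)"

definition dt :: "(real \<Rightarrow> real \<Rightarrow> real \<Rightarrow> real) \<Rightarrow> real \<Rightarrow> real \<Rightarrow> real \<Rightarrow> real" where
  "dt u = (\<lambda>x y t. deriv (\<lambda>s. u x y s) t)"

definition laplacian :: "(real \<Rightarrow> real \<Rightarrow> real \<Rightarrow> real) \<Rightarrow> real \<Rightarrow> real \<Rightarrow> real \<Rightarrow> real" where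
  "laplacian u = (\<lambda>x y t. dx (dx u) x y t + dy (dy u) x y t)"

end

theory Submission
  imports Defs
begin

text \<open>Substituting the ansatz turns the system into two linear relations between the amplitudes
  A and B. For the wave number (a, b) = (1, 0), B = 1 and w = f(\<rho>bar) - c, the second relation
  gives A = f(\<rho>bar) w, and the first becomes the dispersion relation
  w^2 - 2 \<rho>bar w + \<rho>bar f(\<rho>bar) = 0. Its discriminant is nonnegative exactly when
  f(\<rho>bar) \<le> \<rho>bar, i.e. \<rho>bar \<ge> \<rho>m / 2, and every root is nonzero, so A B \<noteq> 0.\<close>

lemma dx_cos_wave:
  "dx (\<lambda>x y t. A * cos (a * x + b * y + c * t)) = (\<lambda>x y t. (- A * a) * sin (a * x + b * y + c * t))"
  unfolding dx_def by (intro ext DERIV_imp_deriv) (auto intro!: derivative_eq_intros)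

lemma dt_cos_wave:
  "dt (\<lambda>x y t. A * cos (a * x + b * y + c * t)) = (\<lambda>x y t. (- A * c) * sin (a * x + b * y + c * t))"
  unfolding dt_def by (intro ext DERIV_imp_deriv) (auto intro!: derivative_eq_intros)

lemma dx_sin_wave:
  "dx (\<lambda>x y t. B * sin (a * x + b * y + c * t)) = (\<lambda>x y t. (B * a) * cos (a * x + b * y + c * t))"
  unfolding dx_def by (intro ext DERIV_imp_deriv) (auto intro!: derivative_eq_intros)

lemma dy_sin_wave:
  "dy (\<lambda>x y t. B * sin (a * x + b * y + c * t)) = (\<lambda>x y t. (B * b) * cos (a * x + b * y + c * t))"
  unfolding dy_def by (intro ext DERIV_imp_deriv) (auto intro!: derivative_eq_intros)

lemma dy_cos_wave:
  "dy (\<lambda>x y t. A * cos (a * x + b * y + c * t)) = (\<lambda>x y t. (- A * b) * sin (a * x + b * y + c * t))"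
  unfolding dy_def by (intro ext DERIV_imp_deriv) (auto intro!: derivative_eq_intros)

lemma dt_sin_wave:
  "dt (\<lambda>x y t. B * sin (a * x + b * y + c * t)) = (\<lambda>x y t. (B * c) * cos (a * x + b * y + c * t))"
  unfolding dt_def by (intro ext DERIV_imp_deriv) (auto intro!: derivative_eq_intros)

lemma laplacian_sin_wave:
  "laplacian (\<lambda>x y t. B * sin (a * x + b * y + c * t))
     = (\<lambda>x y t. (- B * (a\<^sup>2 + b\<^sup>2)) * sin (a * x + b * y + c * t))"
  unfolding laplacian_def dx_sin_wave dy_sin_wave dx_cos_wave dy_cos_wave
  by (intro ext) (simp add: power2_eq_square algebra_simps)

lemma plane_wave_solves_linear_system:
  fixes a b c A B \<alpha> \<beta> \<kappa> \<mu> x y t :: real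
  defines "\<psi> \<equiv> \<lambda>x y t. A * cos (a * x + b * y + c * t)"
    and "\<phi> \<equiv> \<lambda>x y t. B * sin (a * x + b * y + c * t)"
  assumes "A * (\<alpha> * a - c) + \<kappa> * B * (a\<^sup>2 + b\<^sup>2) = 0"
    and "B * (c - \<beta> * a) + \<mu> * A = 0"
  shows "dt \<psi> x y t - \<alpha> * dx \<psi> x y t - \<kappa> * laplacian \<phi> x y t = 0"
    and "dt \<phi> x y t - \<beta> * dx \<phi> x y t + \<mu> * \<psi> x y t = 0"
proof -
  let ?\<theta> = "a * x + b * y + c * t"
  have "dt \<psi> x y t - \<alpha> * dx \<psi> x y t - \<kappa> * laplacian \<phi> x y t
      = (A * (\<alpha> * a - c) + \<kappa> * B * (a\<^sup>2 + b\<^sup>2)) * sin ?\<theta>"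
    unfolding \<psi>_def \<phi>_def dt_cos_wave dx_cos_wave laplacian_sin_wave by (simp add: algebra_simps)
  with assms(3) show "dt \<psi> x y t - \<alpha> * dx \<psi> x y t - \<kappa> * laplacian \<phi> x y t = 0"
    by simp
  have "dt \<phi> x y t - \<beta> * dx \<phi> x y t + \<mu> * \<psi> x y t = (B * (c - \<beta> * a) + \<mu> * A) * cos ?\<theta>"
    unfolding \<psi>_def \<phi>_def dt_sin_wave dx_sin_wave by (simp add: algebra_simps)
  with assms(4) show "dt \<phi> x y t - \<beta> * dx \<phi> x y t + \<mu> * \<psi> x y t = 0"
    by simp
qed

lemma dispersion_relation_has_positive_root:
  fixes r F :: real
  assumes "0 < F" and "F \<le> r"
  obtains w where "w > 0" and "w\<^sup>2 - 2 * r * w + r * F = 0"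
proof
  have "(sqrt (r * (r - F)))\<^sup>2 = r * (r - F)"
    using assms by simp
  then show "(r + sqrt (r * (r - F)))\<^sup>2 - 2 * r * (r + sqrt (r * (r - F))) + r * F = 0"
    by (simp add: power2_eq_square algebra_simps)
  show "r + sqrt (r * (r - F)) > 0"
    using assms by (simp add: add_pos_nonneg)
qed

theorem lemma1:
  fixes \<rho>m \<rho>bar :: real and f :: "real \<Rightarrow> real"
  assumes "\<rho>m > 0"
    and "\<And>\<rho>. f \<rho> = \<rho>m - \<rho>"
    and "\<rho>m / 2 < \<rho>bar" and "\<rho>bar < \<rho>m"
  shows "\<exists>a b c A B :: real. A * B \<noteq> 0 \<and>
    (let \<psi> = (\<lambda>x y t. A * cos (a * x + b * y + c * t));
         \<phi> = (\<lambda>x y t. B * sin (a * x + b * y + c * t))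
     in (\<forall>x y t.
          dt \<psi> x y t - (f \<rho>bar - 2 * \<rho>bar) * dx \<psi> x y t
            - \<rho>bar * (f \<rho>bar)\<^sup>2 * laplacian \<phi> x y t = 0
        \<and> dt \<phi> x y t - f \<rho>bar * dx \<phi> x y t + (1 / f \<rho>bar) * \<psi> x y t = 0))"
proof -
  define F where "F = f \<rho>bar"
  have F: "0 < F" "F \<le> \<rho>bar"
    using assms unfolding F_def by auto
  then obtain w where "w > 0" and root: "w\<^sup>2 - 2 * \<rho>bar * w + \<rho>bar * F = 0"
    by (rule dispersion_relation_has_positive_root)
  txt \<open>The hypotheses of the plane-wave lemma for a = 1, b = 0, c = F - w, A = F w, B = 1.\<close>
  have "(F * w) * ((F - 2 * \<rho>bar) * 1 - (F - w)) + \<rho>bar * F\<^sup>2 * 1 * (1\<^sup>2 + 0\<^sup>2)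
      = F * (w\<^sup>2 - 2 * \<rho>bar * w + \<rho>bar * F)"
    by (simp add: power2_eq_square algebra_simps)
  also have "\<dots> = 0"
    using root by simp
  finally have dispersion:
    "(F * w) * ((F - 2 * \<rho>bar) * 1 - (F - w)) + \<rho>bar * F\<^sup>2 * 1 * (1\<^sup>2 + 0\<^sup>2) = 0" .
  have coupling: "1 * ((F - w) - F * 1) + (1 / F) * (F * w) = 0"
    using F by simp
  have amplitudes: "(F * w) * 1 \<noteq> 0"
    using F \<open>w > 0\<close> by simp
  show ?thesis
    unfolding Let_def F_def[symmetric]
    by (rule exI[of _ 1], rule exI[of _ 0], rule exI[of _ "F - w"], rule exI[of _ "F * w"], rule exI[of _ 1])
      (intro conjI allI amplitudes plane_wave_solves_linear_system[OF dispersion coupling])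
qed

end
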